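(* Let $c\in V$ and let $c=a+b$ be an $X2$-decomposition with $x_0=\|a\|_X$ and $y_0=\|b\|_Y$ (so $y_0=h^c_{YX}(x_0)$). Then: (1) $\int_0^{\|c\|_X} h^c_{YX}(x)\,dx=\tfrac12\|c\|_2^2$; (2) $\int_{x_0}^{\|c\|_X} h^c_{YX}(x)\,dx=\tfrac12\|b\|_2^2$; (3) the area of the region $\{(x,y): 0\le x\le \|c\|_X,\ y_0\le y\le h^c_{YX}(x)\}$ equals $\tfrac12\|a\|_2^2$; (4) $x_0y_0=\langle a,b\rangle$.
   Context: $V$ is a finite dimensional real vector space with a positive definite symmetric bilinear form $\langle\cdot,\cdot\rangle$ and $\|v\|_2=\sqrt{\langle v,v\rangle}$; $\|\cdot\|_X$ is a norm on $V$ with dual norm $\|v\|_Y=\max\{\langle v,w\rangle:\|w\|_X=1\}$. A decomposition $c=a+b$ is an $X2$-decomposition if for every decomposition $c=a'+b'$ we have $\|a'\|_X>\|a\|_X$, or $\|b'\|_2>\|b\|_2$, or $(\|a'\|_X,\|b'\|_2)=(\|a\|_X,\|b\|_2)$. For $x\in[0,\|c\|_X]$ let $\alpha^c_{2X}(x)$ be the unique $a\in V$ minimizing $\|c-a\|_2$ subject to $\|a\|_X\le x$, and define $h^c_{YX}(x)=\|c-\alpha^c_{2X}(x)\|_Y$ (the Pareto sub-frontier; $h^c_{YX}$ is a decreasing continuous function $[0,\|c\|_X]\to[0,\|c\|_Y]$, and for every $X2$-decomposition $c=a+b$ one has $a=\alpha^c_{2X}(\|a\|_X)$). *)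

theory Defs
  imports "HOL-Analysis.Analysis"
begin

text \<open>The space V is modelled by a type of class euclidean_space, whose inner product
  plays the role of the positive definite symmetric bilinear form, and whose norm is the
  2-norm.\<close>

definition is_norm :: "('a::real_vector \<Rightarrow> real) \<Rightarrow> bool" where
  "is_norm N \<longleftrightarrow> (\<forall>x. N x \<ge> 0) \<and> (\<forall>x. N x = 0 \<longleftrightarrow> x = 0)
     \<and> (\<forall>r x. N (r *\<^sub>R x) = \<bar>r\<bar> * N x) \<and> (\<forall>x y. N (x + y) \<le> N x + N y)"

definition dual_norm :: "('a::real_inner \<Rightarrow> real) \<Rightarrow> 'a \<Rightarrow> real" where
  "dual_norm N v = (SUP w\<in>{w. N w = 1}. inner v w)"

definition is_X2_decomp :: "('a::real_normed_vector \<Rightarrow> real) \<Rightarrow> 'a \<Rightarrow> 'a \<Rightarrow> 'a \<Rightarrow> bool" where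
  "is_X2_decomp N c a b \<longleftrightarrow> c = a + b \<and>
     (\<forall>a' b'. c = a' + b' \<longrightarrow> N a' > N a \<or> norm b' > norm b \<or> (N a', norm b') = (N a, norm b))"

definition alpha2X :: "('a::real_normed_vector \<Rightarrow> real) \<Rightarrow> 'a \<Rightarrow> real \<Rightarrow> 'a" where
  "alpha2X N c x = (THE a. N a \<le> x \<and> (\<forall>a'. N a' \<le> x \<longrightarrow> norm (c - a) \<le> norm (c - a')))"

definition hYX :: "('a::real_inner \<Rightarrow> real) \<Rightarrow> 'a \<Rightarrow> real \<Rightarrow> real" where
  "hYX N c x = dual_norm N (c - alpha2X N c x)"

end

theory Submission
  imports Defs
begin

text \<open>Let \<open>\<alpha>(x)\<close> be the projection of \<open>c\<close> onto the ball \<open>{N \<le> x}\<close>, \<open>h(x) = \<parallel>c - \<alpha>(x)\<parallel>\<^sub>Y\<close>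
  and \<open>f(x) = \<parallel>c - \<alpha>(x)\<parallel>\<^sup>2 / 2\<close>. The variational inequality of the projection, tested on
  the sphere \<open>{N = x}\<close>, gives \<open>x h(x) = \<langle>c - \<alpha>(x), \<alpha>(x)\<rangle>\<close>; at \<open>x\<^sub>0\<close> this is (4).
  Comparing \<open>\<alpha>(y)\<close> with the admissible competitor \<open>(y/x) \<alpha>(x)\<close> and using this identity gives
  \<open>f(y) \<le> f(x) - (y - x) h(x) + O((y - x)\<^sup>2)\<close>. Applied at \<open>x\<close> and at \<open>y\<close>, and with continuity
  of \<open>\<alpha>\<close> (which follows from convexity, hence continuity, of \<open>f\<close>), this shows \<open>f' = -h\<close>.
  Now (1) and (2) are the fundamental theorem of calculus, since \<open>f(0) = \<parallel>c\<parallel>\<^sup>2/2\<close>,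
  \<open>f(\<parallel>c\<parallel>\<^sub>X) = 0\<close> and \<open>f(x\<^sub>0) = \<parallel>b\<parallel>\<^sup>2/2\<close>; as \<open>h\<close> is decreasing, the area (3) is
  \<open>f(0) - f(x\<^sub>0) - x\<^sub>0 y\<^sub>0 = (\<parallel>c\<parallel>\<^sup>2 - \<parallel>b\<parallel>\<^sup>2)/2 - \<langle>a, b\<rangle> = \<parallel>a\<parallel>\<^sup>2/2\<close>.\<close>

lemma norm_add_scaleR_power2:
  fixes u v :: "'a::real_inner"
  shows "norm (u + s *\<^sub>R v)^2 = norm u ^ 2 + 2 * s * inner u v + s^2 * norm v ^ 2"
  unfolding power2_norm_eq_inner
  by (simp add: inner_add_left inner_add_right inner_commute power2_eq_square algebra_simps)

lemma norm_convex_combination_power2: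
  fixes u v :: "'a::real_inner"
  shows "norm ((1 - t) *\<^sub>R u + t *\<^sub>R v)^2
    = (1 - t) * norm u ^ 2 + t * norm v ^ 2 - t * (1 - t) * norm (u - v)^2"
  unfolding power2_norm_eq_inner
  by (simp add: inner_add_left inner_add_right inner_diff_left inner_diff_right inner_commute
      algebra_simps power2_eq_square)

lemma difference_quotient_squeeze:
  fixes d F H1 H2 E1 E2 :: real
  assumes "d \<noteq> 0" and upper: "F \<le> - d * H1 + d^2 * E1" and lower: "F \<ge> - d * H2 - d^2 * E2"
    and "E1 \<ge> 0" "E2 \<ge> 0"
  shows "\<bar>F / d + H1\<bar> \<le> \<bar>H2 - H1\<bar> + \<bar>d\<bar> * (E1 + E2)"
proof (cases "d > 0")
  case True
  have "F / d \<le> - H1 + d * E1" "F / d \<ge> - H2 - d * E2"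
    using upper lower True by (simp_all add: field_simps power2_eq_square)
  moreover have "d * E1 \<ge> 0" "d * E2 \<ge> 0" using True assms(4,5) by auto
  ultimately show ?thesis using True by (simp add: abs_if algebra_simps)
next
  case False
  with \<open>d \<noteq> 0\<close> have "d < 0" by simp
  have "F / d \<ge> - H1 + d * E1" "F / d \<le> - H2 - d * E2"
    using upper lower \<open>d < 0\<close> by (simp_all add: field_simps power2_eq_square)
  moreover have "d * E1 \<le> 0" "d * E2 \<le> 0" using \<open>d < 0\<close> assms(4,5) by (auto simp: mult_nonpos_nonneg)
  ultimately show ?thesis using \<open>d < 0\<close> by (simp add: abs_if algebra_simps)
qed

lemma emeasure_region_between_level_and_graph:
  fixes g :: "real \<Rightarrow> real"
  assumes cont: "continuous_on {u..v} g"
    and int: "((\<lambda>x. max (g x - y\<^sub>0) 0) has_integral I) {u..v}"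
  defines "S \<equiv> {(x, y). u \<le> x \<and> x \<le> v \<and> y\<^sub>0 \<le> y \<and> y \<le> g x}"
  shows "S \<in> sets lebesgue \<and> emeasure lebesgue S = ennreal I"
proof -
  have "S = ({u..v} \<times> UNIV) \<inter> (\<lambda>p. (snd p - y\<^sub>0, g (fst p) - snd p)) -` ({0..} \<times> {0..})"
    unfolding S_def by auto
  moreover have "continuous_on ({u..v} \<times> UNIV) (\<lambda>p. (snd p - y\<^sub>0, g (fst p) - snd p))"
    by (intro continuous_intros continuous_on_compose2[OF cont]) auto
  ultimately have "closed S"
    by (simp add: continuous_closed_preimage closed_Times)
  then have S: "S \<in> sets lborel" by simp
  have slice: "Pair x -` S = (if x \<in> {u..v} then {y\<^sub>0..g x} else {})" for x
    unfolding S_def by auto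
  have "emeasure lebesgue S = emeasure (lborel \<Otimes>\<^sub>M lborel) S"
    using S by (simp add: lborel_prod)
  also have "\<dots> = (\<integral>\<^sup>+x. emeasure lborel (Pair x -` S) \<partial>lborel)"
    using S by (intro lborel.emeasure_pair_measure_alt) (simp only: lborel_prod)
  also have "\<dots> = (\<integral>\<^sup>+x. ennreal (max (g x - y\<^sub>0) 0) * indicator {u..v} x \<partial>lborel)"
    by (rule nn_integral_cong) (auto simp: slice indicator_def max_def emeasure_lborel_Icc_eq)
  also have "\<dots> = ennreal I"
    by (rule nn_integral_has_integral_lebesgue'[OF _ int]) simp
  finally show ?thesis using S by simp
qed

locale norm_function =
  fixes N :: "'a::euclidean_space \<Rightarrow> real"
  assumes is_norm: "is_norm N"
begin

lemma nonneg: "N x \<ge> 0"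
  using is_norm unfolding is_norm_def by blast

lemma eq_0_iff: "N x = 0 \<longleftrightarrow> x = 0"
  using is_norm unfolding is_norm_def by blast

lemma scaleR: "N (r *\<^sub>R x) = \<bar>r\<bar> * N x"
  using is_norm unfolding is_norm_def by blast

lemma triangle: "N (x + y) \<le> N x + N y"
  using is_norm unfolding is_norm_def by blast

lemma zero [simp]: "N 0 = 0"
  using eq_0_iff by simp

lemma pos: "x \<noteq> 0 \<Longrightarrow> N x > 0"
  using nonneg[of x] eq_0_iff[of x] by linarith

lemma minus [simp]: "N (- x) = N x"
  using scaleR[of "-1" x] by simp

lemma convex_combination_le:
  "0 \<le> t \<Longrightarrow> t \<le> 1 \<Longrightarrow> N ((1 - t) *\<^sub>R x + t *\<^sub>R y) \<le> (1 - t) * N x + t * N y"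
  using triangle[of "(1 - t) *\<^sub>R x" "t *\<^sub>R y"] by (simp add: scaleR)

lemma convex_on_UNIV: "convex_on UNIV N"
  by (intro convex_onI) (auto simp: convex_combination_le)

lemma continuous: "continuous_on S N"
  using convex_on_continuous[OF open_UNIV convex_on_UNIV] continuous_on_subset by blast

lemma closed_sublevel: "closed {z. N z \<le> x}"
  by (rule closed_Collect_le[OF continuous continuous_on_const])

lemma convex_sublevel: "convex {z. N z \<le> x}"
proof (rule convexI)
  fix y z and u v :: real
  assume "y \<in> {z. N z \<le> x}" "z \<in> {z. N z \<le> x}" "0 \<le> u" "0 \<le> v" "u + v = 1"
  then show "u *\<^sub>R y + v *\<^sub>R z \<in> {z. N z \<le> x}"
    using convex_lower[OF convex_on_UNIV, of y z u v] by simp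
qed

lemma unit_sphere_nonempty: "{w. N w = 1} \<noteq> {}"
proof -
  obtain b :: 'a where "b \<in> Basis" using nonempty_Basis by blast
  then have "N b > 0" by (intro pos) auto
  then have "N (inverse (N b) *\<^sub>R b) = 1" by (simp add: scaleR)
  then show ?thesis by blast
qed

lemma norm_le_scaled: "\<exists>m>0. \<forall>x. m * norm x \<le> N x"
proof -
  obtain b :: 'a where "b \<in> Basis" using nonempty_Basis by blast
  then have "sphere (0::'a) 1 \<noteq> {}" by (auto simp: norm_Basis)
  then obtain x\<^sub>0 where x\<^sub>0: "x\<^sub>0 \<in> sphere 0 1" "\<forall>y\<in>sphere 0 1. N x\<^sub>0 \<le> N y"
    using continuous_attains_inf[OF compact_sphere _ continuous] by blast
  have "N x\<^sub>0 * norm x \<le> N x" for x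
  proof (cases "x = 0")
    case False
    then have "N x\<^sub>0 \<le> N (inverse (norm x) *\<^sub>R x)" using x\<^sub>0 by simp
    also have "\<dots> = N x / norm x" by (simp add: scaleR divide_inverse mult.commute)
    finally show ?thesis using False by (simp add: field_simps)
  qed simp
  moreover have "N x\<^sub>0 > 0" using x\<^sub>0(1) by (intro pos) auto
  ultimately show ?thesis by blast
qed

abbreviation Y :: "'a \<Rightarrow> real" where "Y \<equiv> dual_norm N"

lemma bdd_above_inner_unit_sphere: "bdd_above ((\<lambda>w. inner v w) ` {w. N w = 1})"
proof -
  obtain m where m: "m > 0" "\<And>x. m * norm x \<le> N x" using norm_le_scaled by blast
  have "inner v w \<le> norm v / m" if "N w = 1" for w
  proof -
    have "inner v w \<le> norm v * norm w" by (rule norm_cauchy_schwarz)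
    also have "\<dots> \<le> norm v * (1 / m)"
      using m(2)[of w] m(1) that by (intro mult_left_mono) (simp_all add: field_simps mult.commute)
    finally show ?thesis by simp
  qed
  then show ?thesis by (intro bdd_aboveI[of _ "norm v / m"]) auto
qed

lemma inner_le_dual_norm: "N w = 1 \<Longrightarrow> inner v w \<le> Y v"
  unfolding dual_norm_def by (rule cSUP_upper[OF _ bdd_above_inner_unit_sphere]) simp

lemma dual_norm_le: "(\<And>w. N w = 1 \<Longrightarrow> inner v w \<le> B) \<Longrightarrow> Y v \<le> B"
  unfolding dual_norm_def by (rule cSUP_least[OF unit_sphere_nonempty]) auto

lemma dual_norm_nonneg: "Y v \<ge> 0"
proof -
  obtain w where "N w = 1" using unit_sphere_nonempty by blast
  then show ?thesis
    using inner_le_dual_norm[of w v] inner_le_dual_norm[of "- w" v] by simp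
qed

lemma inner_le_norm_mult_dual_norm: "inner v z \<le> N z * Y v"
proof (cases "z = 0")
  case True
  then show ?thesis by simp
next
  case False
  then have "N (inverse (N z) *\<^sub>R z) = 1" using pos[of z] by (simp add: scaleR)
  then have "inner v (inverse (N z) *\<^sub>R z) \<le> Y v" by (rule inner_le_dual_norm)
  then show ?thesis using pos[OF False] by (simp add: field_simps)
qed

lemma dual_norm_continuous: "continuous_on S Y"
proof -
  have "convex_on UNIV Y"
  proof (intro convex_onI dual_norm_le)
    fix t :: real and u v w :: 'a
    assume "0 < t" "t < 1" "N w = 1"
    then show "inner ((1 - t) *\<^sub>R u + t *\<^sub>R v) w \<le> (1 - t) * Y u + t * Y v"
      using inner_le_dual_norm[of w u] inner_le_dual_norm[of w v]
      by (simp add: inner_add_left add_mono)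
  qed simp
  then show ?thesis
    using convex_on_continuous[OF open_UNIV] continuous_on_subset by blast
qed

end

locale norm_ball_projection = norm_function +
  fixes c :: 'a
begin

definition proj :: "real \<Rightarrow> 'a" where
  "proj x = closest_point {z. N z \<le> x} c"

definition h :: "real \<Rightarrow> real" where
  "h x = Y (c - proj x)"

definition value_fn :: "real \<Rightarrow> real" where
  "value_fn x = norm (c - proj x)^2 / 2"

lemma proj_norm_le:
  assumes "x \<ge> 0"
  shows "N (proj x) \<le> x"
proof -
  have "{z. N z \<le> x} \<noteq> {}" using assms by (auto intro!: exI[of _ 0])
  then show ?thesis unfolding proj_def using closest_point_in_set[OF closed_sublevel] by blast
qed

lemma proj_closest: "x \<ge> 0 \<Longrightarrow> N z \<le> x \<Longrightarrow> norm (c - proj x) \<le> norm (c - z)"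
  unfolding proj_def using closest_point_le[OF closed_sublevel, of z x c] by (simp add: dist_norm)

lemma proj_obtuse: "N z \<le> x \<Longrightarrow> inner (c - proj x) (z - proj x) \<le> 0"
  unfolding proj_def by (rule closest_point_dot[OF convex_sublevel closed_sublevel]) simp

lemma proj_unique:
  "N a \<le> x \<Longrightarrow> (\<And>z. N z \<le> x \<Longrightarrow> norm (c - a) \<le> norm (c - z)) \<Longrightarrow> a = proj x"
  unfolding proj_def
  by (rule closest_point_unique[OF convex_sublevel closed_sublevel]) (auto simp: dist_norm)

lemma alpha2X_eq_proj: "x \<ge> 0 \<Longrightarrow> alpha2X N c x = proj x"
  unfolding alpha2X_def by (rule the_equality) (auto simp: proj_norm_le proj_closest intro: proj_unique)

lemma hYX_eq_h: "x \<ge> 0 \<Longrightarrow> hYX N c x = h x"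
  by (simp add: hYX_def h_def alpha2X_eq_proj)

lemma proj_0: "proj 0 = 0"
  using proj_norm_le[of 0] nonneg[of "proj 0"] eq_0_iff by simp

lemma proj_eq_self: "N c \<le> x \<Longrightarrow> proj x = c"
  by (rule proj_unique[symmetric]) auto

lemma proj_dist_power2_le:
  assumes "N z \<le> x"
  shows "norm (proj x - z)^2 \<le> norm (c - z)^2 - norm (c - proj x)^2"
  using norm_add_scaleR_power2[of "c - proj x" "-1" "z - proj x"] proj_obtuse[OF assms]
  by (simp add: norm_minus_commute)

lemma h_mult_eq_inner: "x \<ge> 0 \<Longrightarrow> x * h x = inner (c - proj x) (proj x)"
proof (cases "x = 0")
  case True
  then show ?thesis by (simp add: proj_0)
next
  case False
  assume "x \<ge> 0"
  with False have x: "x > 0" by simp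
  have "inner (c - proj x) (proj x) \<le> x * h x"
    using inner_le_norm_mult_dual_norm[of "c - proj x" "proj x"] proj_norm_le[of x]
      dual_norm_nonneg[of "c - proj x"] x
    unfolding h_def by (meson less_imp_le mult_right_mono order_trans)
  moreover have "h x \<le> inner (c - proj x) (proj x) / x"
    unfolding h_def
  proof (rule dual_norm_le)
    fix w assume "N w = 1"
    then have "inner (c - proj x) (x *\<^sub>R w - proj x) \<le> 0"
      using x by (intro proj_obtuse) (simp add: scaleR)
    then show "inner (c - proj x) w \<le> inner (c - proj x) (proj x) / x"
      using x by (simp add: inner_diff_right field_simps)
  qed
  ultimately show ?thesis using x by (simp add: field_simps)
qed

lemma value_fn_le:
  assumes x: "x > 0" and y: "y \<ge> 0"
  shows "value_fn y - value_fn x \<le> - (y - x) * h x + (y - x)^2 * (norm (proj x)^2 / (2 * x^2))"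
proof -
  let ?s = "1 - y / x"
  have "N ((y / x) *\<^sub>R proj x) = (y / x) * N (proj x)"
    using x y by (simp add: scaleR)
  also have "\<dots> \<le> (y / x) * x"
    using x y proj_norm_le[of x] by (intro mult_left_mono) auto
  finally have "norm (c - proj y) \<le> norm (c - (y / x) *\<^sub>R proj x)"
    using x by (intro proj_closest y) simp
  then have "norm (c - proj y)^2 \<le> norm ((c - proj x) + ?s *\<^sub>R proj x)^2"
    by (simp add: power_mono algebra_simps)
  also have "\<dots> = norm (c - proj x)^2 + 2 * ?s * (x * h x) + ?s^2 * norm (proj x)^2"
    using x by (simp add: norm_add_scaleR_power2 h_mult_eq_inner)
  also have "\<dots> = norm (c - proj x)^2 - 2 * (y - x) * h x + (y - x)^2 * norm (proj x)^2 / x^2"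
    using x by (simp add: field_simps power2_eq_square)
  finally show ?thesis unfolding value_fn_def by (simp add: field_simps)
qed

lemma value_fn_convex: "convex_on {0..} value_fn"
proof (rule convex_onI)
  fix t x y :: real
  assume t: "0 < t" "t < 1" and xy: "x \<in> {0..}" "y \<in> {0..}"
  let ?w = "(1 - t) * x + t * y"
  let ?z = "(1 - t) *\<^sub>R proj x + t *\<^sub>R proj y"
  have "N ?z \<le> (1 - t) * N (proj x) + t * N (proj y)"
    using t by (intro convex_combination_le) auto
  also have "\<dots> \<le> ?w"
    using t xy proj_norm_le[of x] proj_norm_le[of y] by (intro add_mono mult_left_mono) auto
  finally have "norm (c - proj ?w) \<le> norm (c - ?z)"
    using t xy by (intro proj_closest) auto
  then have "norm (c - proj ?w)^2 \<le> norm ((1 - t) *\<^sub>R (c - proj x) + t *\<^sub>R (c - proj y))^2"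
    by (simp add: power_mono algebra_simps)
  also have "\<dots> \<le> (1 - t) * norm (c - proj x)^2 + t * norm (c - proj y)^2"
    unfolding norm_convex_combination_power2 using t by simp
  finally show "value_fn ((1 - t) *\<^sub>R x + t *\<^sub>R y) \<le> (1 - t) * value_fn x + t * value_fn y"
    unfolding value_fn_def by simp
qed simp

text \<open>Continuity of the convex function \<open>value_fn\<close> forces the slack in the projection
  inequality for the competitor \<open>(y/x) proj x\<close> to vanish as \<open>y \<rightarrow> x\<close>.\<close>
lemma proj_tendsto_pos:
  assumes x: "x > 0"
  shows "(proj \<longlongrightarrow> proj x) (at x)"
proof -
  let ?z = "\<lambda>y. (y / x) *\<^sub>R proj x"
  let ?D = "\<lambda>y. norm (c - ?z y)^2 - 2 * value_fn y"
  let ?g = "\<lambda>y. sqrt \<bar>?D y\<bar> + \<bar>y / x - 1\<bar> * norm (proj x)"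
  have "convex_on {0<..} value_fn"
    by (rule convex_on_subset[OF value_fn_convex]) auto
  then have "continuous_on {0<..} value_fn"
    by (rule convex_on_continuous[OF open_greaterThan])
  then have "isCont value_fn x"
    using x continuous_on_eq_continuous_at[OF open_greaterThan] by blast
  then have "(value_fn \<longlongrightarrow> value_fn x) (at x)"
    by (rule isContD)
  then have "(?g \<longlongrightarrow> sqrt \<bar>?D x\<bar> + \<bar>x / x - 1\<bar> * norm (proj x)) (at x)"
    using x by (intro tendsto_intros) auto
  moreover have "sqrt \<bar>?D x\<bar> + \<bar>x / x - 1\<bar> * norm (proj x) = 0"
    using x by (simp add: value_fn_def)
  ultimately have g: "(?g \<longlongrightarrow> 0) (at x)"
    by metis
  have "\<forall>\<^sub>F y in at x. norm (proj y - proj x) \<le> ?g y"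
    using order_tendstoD(1)[OF tendsto_ident_at x]
  proof eventually_elim
    case (elim y)
    have "N (?z y) \<le> y"
      using x elim proj_norm_le[of x] by (simp add: scaleR field_simps mult_left_mono)
    then have "norm (proj y - ?z y)^2 \<le> ?D y"
      using proj_dist_power2_le unfolding value_fn_def by simp
    then have "norm (proj y - ?z y) \<le> sqrt \<bar>?D y\<bar>"
      by (meson abs_ge_self order_trans real_le_rsqrt)
    moreover have "norm (?z y - proj x) = \<bar>y / x - 1\<bar> * norm (proj x)"
      by (metis norm_scaleR scaleR_diff_left scaleR_one)
    ultimately show ?case
      using norm_triangle_ineq[of "proj y - ?z y" "?z y - proj x"] by simp
  qed
  then have "((\<lambda>y. proj y - proj x) \<longlongrightarrow> 0) (at x)"
    by (rule Lim_null_comparison[OF _ g])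
  then show ?thesis
    by (rule LIM_zero_cancel)
qed

lemma proj_tendsto_0: "(proj \<longlongrightarrow> proj 0) (at 0 within {0..})"
proof -
  obtain m where m: "m > 0" "\<And>x. m * norm x \<le> N x" using norm_le_scaled by blast
  have "norm (proj y - proj 0) \<le> y / m" if "y \<in> {0..}" for y
    using m(2)[of "proj y"] proj_norm_le[of y] m(1) that by (simp add: proj_0 field_simps mult.commute)
  then have "\<forall>\<^sub>F y in at 0 within {0..}. norm (proj y - proj 0) \<le> y / m"
    by (auto simp: eventually_at_filter)
  moreover have "((\<lambda>y. y / m) \<longlongrightarrow> 0) (at 0 within {0..})"
    using tendsto_divide[OF tendsto_ident_at tendsto_const, of m 0 "{0..}"] m(1) by simp
  ultimately have "((\<lambda>y. proj y - proj 0) \<longlongrightarrow> 0) (at 0 within {0..})"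
    by (rule Lim_null_comparison)
  then show ?thesis
    by (rule LIM_zero_cancel)
qed

lemma proj_continuous: "continuous_on {0..} proj"
  unfolding continuous_on_def
proof
  fix x :: real
  assume "x \<in> {0..}"
  then consider "x = 0" | "x > 0" by fastforce
  then show "(proj \<longlongrightarrow> proj x) (at x within {0..})"
    by cases (use proj_tendsto_0 tendsto_within_subset[OF proj_tendsto_pos] in auto)
qed

lemma value_fn_continuous: "continuous_on {0..} value_fn"
  unfolding value_fn_def by (intro continuous_intros proj_continuous) auto

lemma h_tendsto:
  assumes "(proj \<longlongrightarrow> proj x) F"
  shows "(h \<longlongrightarrow> h x) F"
proof -
  have "isCont Y (c - proj x)"
    using dual_norm_continuous[of UNIV] continuous_on_eq_continuous_at[OF open_UNIV] by blast
  then show ?thesis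
    unfolding h_def by (rule isCont_tendsto_compose) (intro tendsto_intros assms)
qed

lemma h_continuous: "continuous_on {0..} h"
  using proj_continuous h_tendsto unfolding continuous_on_def by blast

lemma value_fn_has_derivative:
  assumes x: "x > 0"
  shows "(value_fn has_real_derivative - h x) (at x)"
  unfolding has_field_derivative_iff
proof (rule LIM_zero_cancel, rule Lim_null_comparison)
  let ?E = "\<lambda>y. norm (proj y)^2 / (2 * y^2)"
  let ?g = "\<lambda>y. \<bar>h y - h x\<bar> + \<bar>y - x\<bar> * (?E x + ?E y)"
  show "\<forall>\<^sub>F y in at x. norm ((value_fn y - value_fn x) / (y - x) - - h x) \<le> ?g y"
    using order_tendstoD(1)[OF tendsto_ident_at x] eventually_neq_at_within[of x x UNIV]
  proof eventually_elim
    case (elim y)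
    have "value_fn y - value_fn x \<le> - (y - x) * h x + (y - x)^2 * ?E x"
      using value_fn_le[OF x, of y] elim by simp
    moreover have "value_fn x - value_fn y \<le> (y - x) * h y + (y - x)^2 * ?E y"
      using value_fn_le[of y x] elim x by (simp add: power2_commute)
    then have "value_fn y - value_fn x \<ge> - (y - x) * h y - (y - x)^2 * ?E y"
      by (simp add: algebra_simps)
    ultimately show ?case
      using difference_quotient_squeeze[of "y - x"] elim by simp
  qed
  have "(?g \<longlongrightarrow> \<bar>h x - h x\<bar> + \<bar>x - x\<bar> * (?E x + ?E x)) (at x)"
    using x by (intro tendsto_intros h_tendsto proj_tendsto_pos) auto
  then show "(?g \<longlongrightarrow> 0) (at x)" by simp
qed

lemma h_has_integral:
  assumes "0 \<le> u" "u \<le> v"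
  shows "(h has_integral (value_fn u - value_fn v)) {u..v}"
proof -
  have "((\<lambda>x. - h x) has_integral (value_fn v - value_fn u)) {u..v}"
  proof (rule fundamental_theorem_of_calculus_interior[OF assms(2)])
    show "continuous_on {u..v} value_fn"
      using assms by (intro continuous_on_subset[OF value_fn_continuous]) auto
    show "(value_fn has_vector_derivative - h x) (at x)" if "x \<in> {u<..<v}" for x
      using that assms value_fn_has_derivative has_real_derivative_iff_has_vector_derivative by auto
  qed
  from has_integral_neg[OF this] show ?thesis by simp
qed

lemma h_antimono:
  assumes "0 \<le> x" "x \<le> y"
  shows "h y \<le> h x"
proof (cases "x = 0")
  case True
  have "y * h y \<le> inner c (proj y)"
    using h_mult_eq_inner[of y] inner_ge_zero[of "proj y"] assms by (simp add: inner_diff_left)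
  also have "\<dots> \<le> N (proj y) * Y c"
    by (rule inner_le_norm_mult_dual_norm)
  also have "\<dots> \<le> y * h 0"
    using proj_norm_le[of y] dual_norm_nonneg[of c] assms
    by (simp add: h_def proj_0 mult_right_mono)
  finally show ?thesis
    using True assms by (cases "y = 0") auto
next
  case False
  with assms have x: "x > 0" and y: "y > 0" by auto
  have tangent: "value_fn v - value_fn u \<ge> - h u * (v - u)" if "u > 0" "v > 0" for u v
  proof (rule convex_on_imp_above_tangent[where A = "{0<..}"])
    show "convex_on {0<..} value_fn"
      by (rule convex_on_subset[OF value_fn_convex]) auto
    show "(value_fn has_real_derivative - h u) (at u within {0<..})"
      using value_fn_has_derivative[OF \<open>u > 0\<close>] by (rule has_field_derivative_at_within)
  qed (use that in \<open>auto simp: interior_open intro: convex_connected\<close>)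
  have "(y - x) * (h y - h x) \<le> 0"
    using tangent[OF x y] tangent[OF y x] by (simp add: algebra_simps)
  then show ?thesis
    using assms by (cases "x = y") (auto simp: mult_le_0_iff)
qed

lemma h_excess_has_integral:
  assumes "0 \<le> x\<^sub>0" "x\<^sub>0 \<le> v"
  shows "((\<lambda>x. max (h x - h x\<^sub>0) 0) has_integral (value_fn 0 - value_fn x\<^sub>0 - x\<^sub>0 * h x\<^sub>0)) {0..v}"
proof -
  have "((\<lambda>x. h x - h x\<^sub>0) has_integral (value_fn 0 - value_fn x\<^sub>0 - x\<^sub>0 * h x\<^sub>0)) {0..x\<^sub>0}"
    using has_integral_diff[OF h_has_integral[of 0 x\<^sub>0] has_integral_const_real[of "h x\<^sub>0" 0 x\<^sub>0]]
      assms by (simp add: mult.commute)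
  moreover have "h x - h x\<^sub>0 = max (h x - h x\<^sub>0) 0" if "x \<in> {0..x\<^sub>0}" for x
    using h_antimono[of x x\<^sub>0] that by simp
  ultimately have "((\<lambda>x. max (h x - h x\<^sub>0) 0) has_integral (value_fn 0 - value_fn x\<^sub>0 - x\<^sub>0 * h x\<^sub>0)) {0..x\<^sub>0}"
    by (rule has_integral_eq[rotated])
  moreover have "0 = max (h x - h x\<^sub>0) 0" if "x \<in> {x\<^sub>0..v}" for x
    using h_antimono[of x\<^sub>0 x] assms that by simp
  then have "((\<lambda>x. max (h x - h x\<^sub>0) 0) has_integral 0) {x\<^sub>0..v}"
    by (rule has_integral_eq[OF _ has_integral_0])
  ultimately have "((\<lambda>x. max (h x - h x\<^sub>0) 0) has_integral
      (value_fn 0 - value_fn x\<^sub>0 - x\<^sub>0 * h x\<^sub>0 + 0)) {0..v}"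
    by (rule has_integral_combine[OF assms])
  then show ?thesis by simp
qed

lemma value_fn_0: "value_fn 0 = norm c ^ 2 / 2"
  by (simp add: value_fn_def proj_0)

lemma value_fn_eq_0: "N c \<le> x \<Longrightarrow> value_fn x = 0"
  by (simp add: value_fn_def proj_eq_self)

lemma hYX_has_integral:
  assumes "0 \<le> u" "u \<le> v"
  shows "(hYX N c has_integral (value_fn u - value_fn v)) {u..v}"
  using h_has_integral[OF assms] by (rule has_integral_eq[rotated]) (use assms in \<open>simp add: hYX_eq_h\<close>)

lemma region_under_hYX:
  assumes "0 \<le> x\<^sub>0" "x\<^sub>0 \<le> N c"
  defines "S \<equiv> {(x, y). 0 \<le> x \<and> x \<le> N c \<and> h x\<^sub>0 \<le> y \<and> y \<le> hYX N c x}"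
  shows "S \<in> sets lebesgue \<and> emeasure lebesgue S = ennreal (value_fn 0 - value_fn x\<^sub>0 - x\<^sub>0 * h x\<^sub>0)"
  unfolding S_def
proof (rule emeasure_region_between_level_and_graph)
  show "continuous_on {0..N c} (hYX N c)"
    by (rule continuous_on_eq[OF continuous_on_subset[OF h_continuous]]) (auto simp: hYX_eq_h)
  show "((\<lambda>x. max (hYX N c x - h x\<^sub>0) 0) has_integral (value_fn 0 - value_fn x\<^sub>0 - x\<^sub>0 * h x\<^sub>0)) {0..N c}"
    using h_excess_has_integral[OF assms(1,2)] by (rule has_integral_eq[rotated]) (simp add: hYX_eq_h)
qed

lemma X2_decomp_proj:
  assumes "is_X2_decomp N c a b"
  shows "a = proj (N a)" and "N a \<le> N c"
proof -
  have c: "c = a + b"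
    and min: "\<And>a' b'. c = a' + b' \<Longrightarrow> N a' > N a \<or> norm b' > norm b \<or> (N a', norm b') = (N a, norm b)"
    using assms unfolding is_X2_decomp_def by blast+
  show "a = proj (N a)"
  proof (rule proj_unique)
    fix z
    assume "N z \<le> N a"
    then show "norm (c - a) \<le> norm (c - z)"
      using min[of z "c - z"] c by auto
  qed simp
  show "N a \<le> N c"
    using min[of c 0] by force
qed

end

theorem proposition2p5:
  fixes NX :: "'a::euclidean_space \<Rightarrow> real" and c a b :: 'a
  assumes "is_norm NX"
    and "is_X2_decomp NX c a b"
  shows "(hYX NX c has_integral (norm c ^ 2 / 2)) {0..NX c}
    \<and> (hYX NX c has_integral (norm b ^ 2 / 2)) {NX a..NX c}
    \<and> ({(x, y). 0 \<le> x \<and> x \<le> NX c \<and> dual_norm NX b \<le> y \<and> y \<le> hYX NX c x} \<in> sets lebesgue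
         \<and> emeasure lebesgue {(x, y). 0 \<le> x \<and> x \<le> NX c \<and> dual_norm NX b \<le> y \<and> y \<le> hYX NX c x}
             = ennreal (norm a ^ 2 / 2))
    \<and> NX a * dual_norm NX b = inner a b"
proof -
  interpret norm_ball_projection NX c by unfold_locales (rule assms(1))
  define x\<^sub>0 where "x\<^sub>0 = NX a"
  have x\<^sub>0: "0 \<le> x\<^sub>0" "x\<^sub>0 \<le> NX c" and a: "a = proj x\<^sub>0"
    using nonneg X2_decomp_proj[OF assms(2)] unfolding x\<^sub>0_def by auto
  have c: "c = a + b"
    using assms(2) unfolding is_X2_decomp_def by blast
  then have b: "b = c - proj x\<^sub>0"
    using a by (metis add_diff_cancel_left')
  have y\<^sub>0: "dual_norm NX b = h x\<^sub>0" and f_x\<^sub>0: "value_fn x\<^sub>0 = norm b ^ 2 / 2"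
    by (simp_all add: h_def value_fn_def b)
  have "x\<^sub>0 * h x\<^sub>0 = inner (c - proj x\<^sub>0) (proj x\<^sub>0)"
    by (rule h_mult_eq_inner[OF x\<^sub>0(1)])
  also have "\<dots> = inner a b"
    by (simp add: a b inner_commute)
  finally have inner_ab: "x\<^sub>0 * h x\<^sub>0 = inner a b" .
  have "norm c ^ 2 = norm a ^ 2 + 2 * inner a b + norm b ^ 2"
    unfolding c power2_norm_eq_inner by (simp add: inner_add_left inner_add_right inner_commute)
  then have area: "value_fn 0 - value_fn x\<^sub>0 - x\<^sub>0 * h x\<^sub>0 = norm a ^ 2 / 2"
    using value_fn_0 f_x\<^sub>0 inner_ab by simp
  show ?thesis
    using hYX_has_integral[OF order_refl nonneg[of c]] hYX_has_integral[OF x\<^sub>0]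
      region_under_hYX[OF x\<^sub>0, unfolded area] inner_ab
    by (simp add: value_fn_0 value_fn_eq_0 f_x\<^sub>0 x\<^sub>0_def[symmetric] y\<^sub>0)
qed

end
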